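(* Let $\theta\in\mathbb{R}^n$, $\sigma^2>0$, and $g:\mathbb{R}^n\to\mathbb{R}^n$ measurable. Suppose that for some $\beta>0$ and integer $k\ge0$, $$\mathbb{E}\big[\|g(Y_\beta)\|_2^2\,\|Y_\beta-\theta\|_2^{2m}\big]<\infty,\qquad m=0,\dots,k.$$ Then the map $\alpha\mapsto\mathrm{Risk}_\alpha(g)$ has $k$ continuous derivatives on $[0,\beta)$.
   Context: For $\alpha\ge0$, $Y_\alpha\sim N(\theta,(1+\alpha)\sigma^2 I_n)$ and $\mathrm{Risk}_\alpha(g)=\mathbb{E}\|\theta-g(Y_\alpha)\|_2^2$ (so $\mathrm{Risk}_0(g)=\mathrm{Risk}(g)$ is the ordinary risk under $Y\sim N(\theta,\sigma^2I_n)$). *)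

theory Defs
  imports "HOL-Probability.Probability"
begin

text \<open>Isotropic Gaussian N(theta, v I_n) on R^n = real^'n, as the product of
  the coordinatewise univariate normal densities (standard deviation sqrt v).\<close>
definition gauss_vec :: "real^'n \<Rightarrow> real \<Rightarrow> (real^'n) measure" where
  "gauss_vec \<theta> v = density lborel
     (\<lambda>y. ennreal (\<Prod>i\<in>UNIV. normal_density (\<theta> $ i) (sqrt v) (y $ i)))"

definition Y_law :: "real^'n \<Rightarrow> real \<Rightarrow> real \<Rightarrow> (real^'n) measure" where
  "Y_law \<theta> \<sigma>2 \<alpha> = gauss_vec \<theta> ((1 + \<alpha>) * \<sigma>2)"

definition Risk :: "real^'n \<Rightarrow> real \<Rightarrow> (real^'n \<Rightarrow> real^'n) \<Rightarrow> real \<Rightarrow> real" where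
  "Risk \<theta> \<sigma>2 g \<alpha> = (\<integral>y. (norm (\<theta> - g y))\<^sup>2 \<partial>(Y_law \<theta> \<sigma>2 \<alpha>))"

definition k_times_cont_diff_on :: "nat \<Rightarrow> (real \<Rightarrow> real) \<Rightarrow> real set \<Rightarrow> bool" where
  "k_times_cont_diff_on k f S \<longleftrightarrow>
     (\<exists>D :: nat \<Rightarrow> real \<Rightarrow> real.
        (\<forall>t\<in>S. D 0 t = f t) \<and>
        (\<forall>j<k. \<forall>t\<in>S. (D j has_real_derivative D (Suc j) t) (at t within S)) \<and>
        (\<forall>j\<le>k. continuous_on S (D j)))"

end

theory Submission
  imports Defs
begin

text \<open>
  Put v = (1 + \<alpha>) \<sigma>^2. The density of Y_\<alpha> is (2 \<pi> v) powr (-n/2) * exp (- \<parallel>y - \<theta>\<parallel>^2 / (2 v)),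
  so Risk_\<alpha> = (2 \<pi> v) powr (-n/2) * L (1 / (2 v)) for the Laplace transform
  L s = \<integral> \<parallel>\<theta> - g y\<parallel>^2 exp (- s \<parallel>y - \<theta>\<parallel>^2) dy.
  The moment hypothesis for m = 0 says that L is finite at s_0 = 1 / (2 (1 + \<beta>) \<sigma>^2).
  Since p^j exp (- \<epsilon> p) \<le> j! / \<epsilon>^j for p \<ge> 0, every integral obtained by differentiating
  under the integral sign is dominated on (s_0, \<infinity>), so L is smooth there; its j-th derivative is
  (-1)^j times the same integral with the extra weight \<parallel>y - \<theta>\<parallel>^(2j). For \<alpha> \<in> [0, \<beta>) the
  parameter 1 / (2 v) lies in this open half-line, and the risk is obtained from L and smooth
  functions of \<alpha> by products and composition.
\<close>

fun Ck_on :: "nat \<Rightarrow> real set \<Rightarrow> (real \<Rightarrow> real) \<Rightarrow> bool" where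
  "Ck_on 0 S f \<longleftrightarrow> continuous_on S f"
| "Ck_on (Suc k) S f \<longleftrightarrow>
     (\<exists>f'. (\<forall>t\<in>S. (f has_real_derivative f' t) (at t within S)) \<and> Ck_on k S f')"

lemma Ck_on_SucI:
  "(\<And>t. t \<in> S \<Longrightarrow> (f has_real_derivative f' t) (at t within S)) \<Longrightarrow> Ck_on k S f' \<Longrightarrow> Ck_on (Suc k) S f"
  by auto

lemma Ck_on_SucD: "Ck_on (Suc k) S f \<Longrightarrow> Ck_on k S f"
proof (induction k arbitrary: f)
  case 0
  then show ?case by (auto intro: DERIV_continuous_on)
next
  case (Suc k)
  then show ?case by auto
qed

lemma Ck_on_cong:
  assumes "Ck_on k S f" and "\<And>t. t \<in> S \<Longrightarrow> f t = g t"
  shows "Ck_on k S g"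
proof (cases k)
  case 0
  then show ?thesis
    using assms continuous_on_cong[OF refl, of S f g] by simp
next
  case (Suc m)
  then obtain f' where f': "\<forall>t\<in>S. (f has_real_derivative f' t) (at t within S)" "Ck_on m S f'"
    using assms(1) by auto
  have "(g has_real_derivative f' t) (at t within S)" if "t \<in> S" for t
    using has_field_derivative_transform_within[OF f'(1)[rule_format, OF that] zero_less_one] that assms(2)
    by auto
  with f'(2) show ?thesis
    unfolding Suc by (rule Ck_on_SucI[rotated])
qed

lemma Ck_on_const: "Ck_on k S (\<lambda>t. c)"
  by (induction k arbitrary: c) (auto intro!: exI[of _ "\<lambda>_. 0"])

lemma Ck_on_add: "Ck_on k S f \<Longrightarrow> Ck_on k S g \<Longrightarrow> Ck_on k S (\<lambda>t. f t + g t)"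
proof (induction k arbitrary: f g)
  case 0
  then show ?case by (auto intro: continuous_on_add)
next
  case (Suc k)
  then obtain f' g' where "\<forall>t\<in>S. (f has_real_derivative f' t) (at t within S)" "Ck_on k S f'"
    "\<forall>t\<in>S. (g has_real_derivative g' t) (at t within S)" "Ck_on k S g'" by auto
  with Suc.IH show ?case
    by (intro Ck_on_SucI[where f' = "\<lambda>t. f' t + g' t"]) (auto intro: derivative_intros)
qed

lemma Ck_on_mult: "Ck_on k S f \<Longrightarrow> Ck_on k S g \<Longrightarrow> Ck_on k S (\<lambda>t. f t * g t)"
proof (induction k arbitrary: f g)
  case 0
  then show ?case by (auto intro: continuous_on_mult)
next
  case (Suc k)
  then obtain f' g' where f': "\<forall>t\<in>S. (f has_real_derivative f' t) (at t within S)" "Ck_on k S f'"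
    and g': "\<forall>t\<in>S. (g has_real_derivative g' t) (at t within S)" "Ck_on k S g'" by auto
  have "Ck_on k S (\<lambda>t. f' t * g t + g' t * f t)"
    using Suc.IH[OF f'(2) Ck_on_SucD[OF Suc.prems(2)]] Suc.IH[OF g'(2) Ck_on_SucD[OF Suc.prems(1)]]
    by (rule Ck_on_add)
  with f'(1) g'(1) show ?case
    by (intro Ck_on_SucI[where f' = "\<lambda>t. f' t * g t + g' t * f t"]) (auto intro: DERIV_mult)
qed

lemma Ck_on_compose:
  assumes "open T" and "\<And>t. t \<in> S \<Longrightarrow> \<phi> t \<in> T"
  shows "Ck_on k T f \<Longrightarrow> Ck_on k S \<phi> \<Longrightarrow> Ck_on k S (\<lambda>t. f (\<phi> t))"
proof (induction k arbitrary: f)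
  case 0
  then show ?case
    using assms(2) by (auto intro: continuous_on_compose2[of T f S \<phi>])
next
  case (Suc k)
  obtain f' where f': "\<forall>x\<in>T. (f has_real_derivative f' x) (at x within T)" "Ck_on k T f'"
    using Suc.prems(1) by auto
  obtain \<phi>' where \<phi>': "\<forall>t\<in>S. (\<phi> has_real_derivative \<phi>' t) (at t within S)" "Ck_on k S \<phi>'"
    using Suc.prems(2) by auto
  have "((\<lambda>t. f (\<phi> t)) has_real_derivative f' (\<phi> t) * \<phi>' t) (at t within S)" if "t \<in> S" for t
  proof -
    have "\<phi> t \<in> T"
      using assms(2) that .
    with f'(1) have "(f has_real_derivative f' (\<phi> t)) (at (\<phi> t) within T)"
      by blast
    then have "(f has_real_derivative f' (\<phi> t)) (at (\<phi> t))"
      by (simp only: at_within_open[OF \<open>\<phi> t \<in> T\<close> \<open>open T\<close>])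
    from DERIV_chain[OF this \<phi>'(1)[rule_format, OF that]] show ?thesis
      by (simp add: o_def)
  qed
  moreover have "Ck_on k S (\<lambda>t. f' (\<phi> t) * \<phi>' t)"
    using Suc.IH[OF f'(2) Ck_on_SucD[OF Suc.prems(2)]] \<phi>'(2) by (rule Ck_on_mult)
  ultimately show ?case
    by (rule Ck_on_SucI)
qed

lemma Ck_on_powr: "Ck_on k {0<..} (\<lambda>x. x powr a)"
proof -
  have deriv: "((\<lambda>x. x powr a) has_real_derivative a * x powr (a - 1)) (at x within {0<..})"
    if "x \<in> {0<..}" for x a
    using that by (intro has_field_derivative_at_within[OF has_real_derivative_powr]) simp
  show ?thesis
  proof (induction k arbitrary: a)
    case 0
    show ?case
      unfolding Ck_on.simps by (rule DERIV_continuous_on[OF deriv])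
  next
    case (Suc k)
    show ?case
      by (rule Ck_on_SucI[OF deriv Ck_on_mult[OF Ck_on_const Suc.IH]])
  qed
qed

lemma Ck_on_affine_powr:
  assumes "0 < c" and "S \<subseteq> {-1<..}"
  shows "Ck_on k S (\<lambda>x. (c * (1 + x)) powr a)"
proof -
  have "Ck_on k S (\<lambda>x. c + c * x)"
  proof (cases k)
    case 0
    then show ?thesis
      by (auto intro!: continuous_intros)
  next
    case (Suc m)
    have "((\<lambda>x. c + c * x) has_real_derivative c) (at x within S)" for x
      by (auto intro!: derivative_eq_intros)
    then show ?thesis
      unfolding Suc by (intro Ck_on_SucI[where f' = "\<lambda>_. c"] Ck_on_const)
  qed
  moreover have "0 < c + c * x" if "x \<in> S" for x
  proof -
    have "0 < c * (1 + x)"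
      using assms that by (intro mult_pos_pos) auto
    then show ?thesis
      by (simp add: algebra_simps)
  qed
  ultimately have "Ck_on k S (\<lambda>x. (c + c * x) powr a)"
    by (intro Ck_on_compose[OF open_greaterThan _ Ck_on_powr]) (auto intro: mult_pos_pos)
  then show ?thesis
    by (simp add: distrib_left)
qed

lemma Ck_on_imp_k_times_cont_diff_on: "Ck_on k S f \<Longrightarrow> k_times_cont_diff_on k f S"
proof (induction k arbitrary: f)
  case 0
  then show ?case
    unfolding k_times_cont_diff_on_def by (intro exI[of _ "\<lambda>j. f"]) auto
next
  case (Suc k)
  then obtain f' where f': "\<forall>t\<in>S. (f has_real_derivative f' t) (at t within S)" "Ck_on k S f'"
    by auto
  from Suc.IH[OF f'(2)] obtain D where D: "\<forall>t\<in>S. D 0 t = f' t" "\<forall>j<k. \<forall>t\<in>S. (D j has_real_derivative D (Suc j) t) (at t within S)"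
      "\<forall>j\<le>k. continuous_on S (D j)"
    unfolding k_times_cont_diff_on_def by auto
  define E where "E j = (case j of 0 \<Rightarrow> f | Suc i \<Rightarrow> D i)" for j
  have "\<forall>j<Suc k. \<forall>t\<in>S. (E j has_real_derivative E (Suc j) t) (at t within S)"
    using f'(1) D(1,2) by (auto simp: E_def less_Suc_eq_0_disj)
  moreover have "\<forall>j\<le>Suc k. continuous_on S (E j)"
    using D(3) f'(1) DERIV_continuous_on[of S f f'] by (auto simp: E_def split: nat.split)
  ultimately show ?case
    unfolding k_times_cont_diff_on_def by (intro exI[of _ E]) (simp add: E_def)
qed

lemma integral_dominated_convergence_at:
  fixes s :: "real \<Rightarrow> 'a \<Rightarrow> real"
  assumes "f \<in> borel_measurable M" and "integrable M w"
    and bound: "\<forall>\<^sub>F t in at t0. s t \<in> borel_measurable M \<and> (\<forall>x\<in>space M. norm (s t x) \<le> w x)"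
    and lim: "\<And>x. x \<in> space M \<Longrightarrow> ((\<lambda>t. s t x) \<longlongrightarrow> f x) (at t0)"
  shows "((\<lambda>t. integral\<^sup>L M (s t)) \<longlongrightarrow> integral\<^sup>L M f) (at t0)"
proof (rule tendsto_at_iff_sequentially[THEN iffD2], intro allI impI)
  fix X :: "nat \<Rightarrow> real"
  assume "\<forall>i. X i \<in> UNIV - {t0}" and "X \<longlonglongrightarrow> t0"
  then have X: "filterlim X (at t0) sequentially"
    by (auto simp: filterlim_at)
  from filterlim_iff[THEN iffD1, OF X, rule_format, OF bound]
  obtain N where N: "\<And>n. N \<le> n \<Longrightarrow>
      s (X n) \<in> borel_measurable M \<and> (\<forall>x\<in>space M. norm (s (X n) x) \<le> w x)"
    by (auto simp: eventually_sequentially)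
  have "(\<lambda>n. integral\<^sup>L M (s (X (n + N)))) \<longlonglongrightarrow> integral\<^sup>L M f"
  proof (rule integral_dominated_convergence[OF assms(1) _ assms(2)])
    show "AE x in M. (\<lambda>n. s (X (n + N)) x) \<longlonglongrightarrow> f x"
      using filterlim_compose[OF lim X] by (intro AE_I2 LIMSEQ_ignore_initial_segment) auto
  qed (use N in \<open>auto intro!: AE_I2\<close>)
  then show "((\<lambda>t. integral\<^sup>L M (s t)) \<circ> X) \<longlonglongrightarrow> integral\<^sup>L M f"
    unfolding o_def by (rule LIMSEQ_offset)
qed

lemma abs_difference_quotient_le:
  assumes "\<And>z. z \<in> ball s e \<Longrightarrow> (f has_real_derivative f' z) (at z)"
    and "\<And>z. z \<in> ball s e \<Longrightarrow> \<bar>f' z\<bar> \<le> B" and "t \<in> ball s e"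
  shows "\<bar>(f t - f s) / (t - s)\<bar> \<le> B"
proof -
  have "s \<in> ball s e"
    using assms(3) zero_le_dist[of s t] by (simp only: mem_ball dist_self)
  have "(f has_real_derivative f' z) (at z within ball s e)" if "z \<in> ball s e" for z
    using assms(1)[OF that] by (rule has_field_derivative_at_within)
  then have "norm (f t - f s) \<le> B * norm (t - s)"
    using assms(2) by (intro field_differentiable_bound[OF convex_ball _ _ assms(3) \<open>s \<in> ball s e\<close>]) auto
  moreover have "0 \<le> B"
    using assms(2)[OF \<open>s \<in> ball s e\<close>] by linarith
  ultimately show ?thesis
    by (cases "t = s") (simp_all add: abs_divide pos_divide_le_eq)
qed

lemma has_real_derivative_integral:
  fixes f f' :: "real \<Rightarrow> 'a \<Rightarrow> real"
  assumes "0 < e"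
    and f_meas: "\<And>t. t \<in> ball s e \<Longrightarrow> f t \<in> borel_measurable M"
    and f'_meas: "f' s \<in> borel_measurable M"
    and deriv: "\<And>t x. t \<in> ball s e \<Longrightarrow> x \<in> space M \<Longrightarrow> ((\<lambda>t. f t x) has_real_derivative f' t x) (at t)"
    and "integrable M (f s)" and "integrable M w"
    and bound: "\<And>t x. t \<in> ball s e \<Longrightarrow> x \<in> space M \<Longrightarrow> \<bar>f' t x\<bar> \<le> w x"
  shows "((\<lambda>t. \<integral>x. f t x \<partial>M) has_real_derivative (\<integral>x. f' s x \<partial>M)) (at s)"
proof -
  define q where "q t x = (f t x - f s x) / (t - s)" for t x
  have s: "s \<in> ball s e"
    using \<open>0 < e\<close> by simp
  have q_bound: "\<bar>q t x\<bar> \<le> w x" if "t \<in> ball s e" "x \<in> space M" for t x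
    unfolding q_def using deriv bound that by (intro abs_difference_quotient_le[where f' = "\<lambda>t. f' t x"])
  have q_meas: "q t \<in> borel_measurable M" if "t \<in> ball s e" for t
    unfolding q_def using f_meas[OF that] f_meas[OF s] by measurable
  have q_integrable: "integrable M (q t)" if "t \<in> ball s e" for t
    using q_bound[OF that] by (intro Bochner_Integration.integrable_bound[OF \<open>integrable M w\<close> q_meas[OF that]])
      (auto intro!: AE_I2 intro: order_trans[OF _ abs_ge_self])
  have difference_quotient:
    "(integral\<^sup>L M (f t) - integral\<^sup>L M (f s)) / (t - s) = integral\<^sup>L M (q t)"
    if "t \<in> ball s e" "t \<noteq> s" for t
  proof -
    have "integrable M (\<lambda>x. f s x + (t - s) * q t x)"
      using \<open>integrable M (f s)\<close> q_integrable[OF that(1)] by auto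
    moreover have "integrable M (\<lambda>x. f s x + (t - s) * q t x) = integrable M (f t)"
      by (rule Bochner_Integration.integrable_cong) (use that in \<open>auto simp: q_def\<close>)
    ultimately have "integrable M (f t)"
      by simp
    have "integral\<^sup>L M (q t) = (\<integral>x. f t x - f s x \<partial>M) / (t - s)"
      unfolding q_def by (rule integral_divide_zero)
    also have "\<dots> = (integral\<^sup>L M (f t) - integral\<^sup>L M (f s)) / (t - s)"
      using \<open>integrable M (f t)\<close> \<open>integrable M (f s)\<close> by simp
    finally show ?thesis ..
  qed
  have "((\<lambda>t. integral\<^sup>L M (q t)) \<longlongrightarrow> (\<integral>x. f' s x \<partial>M)) (at s)"
  proof (rule integral_dominated_convergence_at[OF f'_meas \<open>integrable M w\<close>])
    show "\<forall>\<^sub>F t in at s. q t \<in> borel_measurable M \<and> (\<forall>x\<in>space M. norm (q t x) \<le> w x)"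
      unfolding eventually_at using \<open>0 < e\<close> q_meas q_bound
      by (intro exI[of _ e]) (auto simp: dist_commute)
    show "((\<lambda>t. q t x) \<longlongrightarrow> f' s x) (at s)" if "x \<in> space M" for x
      using deriv[OF s that] unfolding has_field_derivative_iff q_def .
  qed
  moreover have "\<forall>\<^sub>F t in at s. integral\<^sup>L M (q t) = (integral\<^sup>L M (f t) - integral\<^sup>L M (f s)) / (t - s)"
    unfolding eventually_at using \<open>0 < e\<close> difference_quotient
    by (intro exI[of _ e]) (auto simp: dist_commute)
  ultimately show ?thesis
    unfolding has_field_derivative_iff by (rule Lim_transform_eventually)
qed

definition laplace_moment :: "'a measure \<Rightarrow> ('a \<Rightarrow> real) \<Rightarrow> ('a \<Rightarrow> real) \<Rightarrow> nat \<Rightarrow> real \<Rightarrow> real"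
  where "laplace_moment M h p j s = (\<integral>x. h x * p x ^ j * exp (- s * p x) \<partial>M)"

lemma power_mult_exp_le_fact:
  fixes x e :: real
  assumes "0 \<le> x" and "0 < e"
  shows "x ^ m * exp (- e * x) \<le> fact m / e ^ m"
proof -
  have "(e * x) ^ m / fact m = (\<Sum>n\<in>{m}. inverse (fact n) *\<^sub>R (e * x) ^ n)"
    by (simp add: divide_inverse mult.commute)
  also have "\<dots> \<le> exp (e * x)"
    unfolding exp_def using assms by (intro sum_le_suminf summable_exp_generic) auto
  finally have "e ^ m * x ^ m \<le> fact m * exp (e * x)"
    by (simp add: power_mult_distrib field_simps)
  then have "e ^ m * (x ^ m * exp (- e * x)) \<le> fact m"
    by (simp add: exp_minus field_simps)
  then show ?thesis
    using assms by (simp add: field_simps)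
qed

lemma laplace_integrand_le:
  fixes x h :: real
  assumes "0 \<le> x" and "0 \<le> h" and "0 < e" and "e \<le> t - s0"
  shows "h * x ^ m * exp (- t * x) \<le> fact m / e ^ m * (h * exp (- s0 * x))"
proof -
  have "x ^ m * exp (- t * x) = x ^ m * exp (- (t - s0) * x) * exp (- s0 * x)"
    by (simp add: mult.assoc flip: exp_add) (simp add: algebra_simps)
  also have "\<dots> \<le> x ^ m * exp (- e * x) * exp (- s0 * x)"
  proof -
    have "exp (- (t - s0) * x) \<le> exp (- e * x)"
      using mult_right_mono[OF \<open>e \<le> t - s0\<close> \<open>0 \<le> x\<close>] by (simp add: algebra_simps)
    then show ?thesis
      using assms by (intro mult_right_mono mult_left_mono) auto
  qed
  also have "\<dots> \<le> fact m / e ^ m * exp (- s0 * x)"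
    using assms by (intro mult_right_mono power_mult_exp_le_fact) auto
  finally have "h * (x ^ m * exp (- t * x)) \<le> h * (fact m / e ^ m * exp (- s0 * x))"
    using \<open>0 \<le> h\<close> by (rule mult_left_mono)
  then show ?thesis
    by (simp only: mult.assoc mult.left_commute)
qed

context
  fixes M :: "'a measure" and h p :: "'a \<Rightarrow> real" and s0 :: real
  assumes h_meas [measurable]: "h \<in> borel_measurable M"
    and p_meas [measurable]: "p \<in> borel_measurable M"
    and h_nonneg: "\<And>x. 0 \<le> h x" and p_nonneg: "\<And>x. 0 \<le> p x"
    and integrable_at_s0: "integrable M (\<lambda>x. h x * exp (- s0 * p x))"
begin

lemma laplace_integrand_le_at_s0:
  "e \<le> t - s0 \<Longrightarrow> 0 < e \<Longrightarrow>
    \<bar>h x * p x ^ m * exp (- t * p x)\<bar> \<le> fact m / e ^ m * (h x * exp (- s0 * p x))"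
  using laplace_integrand_le[OF p_nonneg h_nonneg] h_nonneg[of x] p_nonneg[of x] by simp

lemma integrable_laplace_integrand:
  assumes "s0 < s"
  shows "integrable M (\<lambda>x. h x * p x ^ j * exp (- s * p x))"
proof (rule Bochner_Integration.integrable_bound)
  show "integrable M (\<lambda>x. fact j / (s - s0) ^ j * (h x * exp (- s0 * p x)))"
    using integrable_at_s0 by simp
  show "AE x in M. norm (h x * p x ^ j * exp (- s * p x))
      \<le> norm (fact j / (s - s0) ^ j * (h x * exp (- s0 * p x)))"
    using laplace_integrand_le_at_s0[of "s - s0" s] assms
    by (intro AE_I2) (auto simp: abs_mult h_nonneg)
qed simp

lemma has_real_derivative_laplace_moment:
  assumes "s0 < s"
  shows "(laplace_moment M h p j has_real_derivative - laplace_moment M h p (Suc j) s) (at s)"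
proof -
  define e where "e = (s - s0) / 2"
  have "0 < e"
    using assms by (simp add: e_def)
  have "e \<le> t - s0" if "t \<in> ball s e" for t
    using that unfolding e_def mem_ball dist_real_def abs_less_iff by (simp add: field_simps)
  then have bound: "\<bar>- (h x * p x ^ Suc j * exp (- t * p x))\<bar>
      \<le> fact (Suc j) / e ^ Suc j * (h x * exp (- s0 * p x))" if "t \<in> ball s e" for t x
    using laplace_integrand_le_at_s0 \<open>0 < e\<close> that by (simp only: abs_minus_cancel)
  have "((\<lambda>s. \<integral>x. h x * p x ^ j * exp (- s * p x) \<partial>M) has_real_derivative
      (\<integral>x. - (h x * p x ^ Suc j * exp (- s * p x)) \<partial>M)) (at s)"
  proof (rule has_real_derivative_integral[OF \<open>0 < e\<close>, where w = "\<lambda>x. fact (Suc j) / e ^ Suc j * (h x * exp (- s0 * p x))"])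
    show "((\<lambda>t. h x * p x ^ j * exp (- t * p x)) has_real_derivative
        - (h x * p x ^ Suc j * exp (- t * p x))) (at t)" for t x
      by (auto intro!: derivative_eq_intros simp: algebra_simps)
    show "integrable M (\<lambda>x. h x * p x ^ j * exp (- s * p x))"
      using assms by (rule integrable_laplace_integrand)
    show "integrable M (\<lambda>x. fact (Suc j) / e ^ Suc j * (h x * exp (- s0 * p x)))"
      using integrable_at_s0 by simp
    show "\<bar>- (h x * p x ^ Suc j * exp (- t * p x))\<bar>
        \<le> fact (Suc j) / e ^ Suc j * (h x * exp (- s0 * p x))" if "t \<in> ball s e" for t x
      using that by (rule bound)
    show "(\<lambda>x. h x * p x ^ j * exp (- t * p x)) \<in> borel_measurable M" for t
      by measurable
    show "(\<lambda>x. - (h x * p x ^ Suc j * exp (- s * p x))) \<in> borel_measurable M"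
      by measurable
  qed
  then show ?thesis
    by (simp add: laplace_moment_def[abs_def])
qed

lemma Ck_on_laplace_moment: "Ck_on k {s0<..} (laplace_moment M h p j)"
proof -
  have deriv: "(laplace_moment M h p j has_real_derivative - laplace_moment M h p (Suc j) s)
      (at s within {s0<..})" if "s \<in> {s0<..}" for s j
    using that by (simp add: has_field_derivative_at_within has_real_derivative_laplace_moment)
  show ?thesis
  proof (induction k arbitrary: j)
    case 0
    show ?case
      unfolding Ck_on.simps by (rule DERIV_continuous_on[OF deriv])
  next
    case (Suc k)
    have "Ck_on k {s0<..} (\<lambda>s. - 1 * laplace_moment M h p (Suc j) s)"
      by (rule Ck_on_mult[OF Ck_on_const Suc.IH])
    then have "Ck_on k {s0<..} (\<lambda>s. - laplace_moment M h p (Suc j) s)"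
      by simp
    show ?case
    proof (rule Ck_on_SucI)
      show "(laplace_moment M h p j has_real_derivative - laplace_moment M h p (Suc j) s)
          (at s within {s0<..})" if "s \<in> {s0<..}" for s
        using that by (rule deriv)
    qed fact
  qed
qed

end

lemma prod_normal_density_eq:
  fixes \<theta> y :: "real^'n"
  assumes "0 < v"
  shows "(\<Prod>i\<in>UNIV. normal_density (\<theta> $ i) (sqrt v) (y $ i))
       = (2 * pi * v) powr (- (CARD('n) / 2)) * exp (- (1 / (2 * v)) * (norm (y - \<theta>))\<^sup>2)"
proof -
  have "(\<Prod>i\<in>UNIV. normal_density (\<theta> $ i) (sqrt v) (y $ i))
      = (\<Prod>i\<in>UNIV. (2 * pi * v) powr (- (1 / 2)) * exp (- (1 / (2 * v)) * (y $ i - \<theta> $ i)\<^sup>2))"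
    using assms by (simp add: normal_density_def powr_minus_divide powr_half_sqrt field_simps)
  also have "\<dots> = ((2 * pi * v) powr (- (1 / 2))) ^ CARD('n)
      * exp (- (1 / (2 * v)) * (\<Sum>i\<in>UNIV. (y $ i - \<theta> $ i)\<^sup>2))"
    by (simp add: prod.distrib exp_sum sum_distrib_left)
  also have "((2 * pi * v) powr (- (1 / 2))) ^ CARD('n) = (2 * pi * v) powr (- (CARD('n) / 2))"
    using assms by (simp add: powr_power)
  also have "(\<Sum>i\<in>UNIV. (y $ i - \<theta> $ i)\<^sup>2) = (norm (y - \<theta>))\<^sup>2"
    by (simp only: power2_norm_eq_inner) (simp add: inner_vec_def power2_eq_square)
  finally show ?thesis .
qed

lemma prob_space_gauss_vec:
  fixes \<theta> :: "real^'n"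
  assumes "0 < v"
  shows "prob_space (gauss_vec \<theta> v)"
proof
  have basis: "(Basis :: (real^'n) set) = (\<lambda>i. axis i 1) ` UNIV"
    by (auto simp: Basis_vec_def)
  have "inj (\<lambda>i::'n. axis i (1::real))"
    by (auto simp: inj_on_def axis_eq_axis)
  then have "ennreal (\<Prod>i\<in>UNIV. normal_density (\<theta> $ i) (sqrt v) (y $ i))
      = (\<Prod>b\<in>Basis. ennreal (normal_density (\<theta> \<bullet> b) (sqrt v) (y \<bullet> b)))" for y :: "real^'n"
    by (simp add: basis prod.reindex cart_eq_inner_axis prod_ennreal)
  then have "emeasure (gauss_vec \<theta> v) (space (gauss_vec \<theta> v))
      = (\<integral>\<^sup>+y. (\<Prod>b\<in>Basis. ennreal (normal_density (\<theta> \<bullet> b) (sqrt v) (y \<bullet> b))) \<partial>lborel)"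
    by (simp add: gauss_vec_def emeasure_density)
  also have "\<dots> = (\<Prod>b\<in>(Basis :: (real^'n) set). \<integral>\<^sup>+x. ennreal (normal_density (\<theta> \<bullet> b) (sqrt v) x) \<partial>lborel)"
    by (rule nn_integral_lborel_prod) auto
  also have "\<dots> = 1"
    using assms by (simp add: nn_integral_eq_integral integrable_normal_density)
  finally show "emeasure (gauss_vec \<theta> v) (space (gauss_vec \<theta> v)) = 1" .
qed

lemma integrable_gauss_weight:
  fixes \<theta> :: "real^'n"
  assumes "0 < v" and [measurable]: "f \<in> borel_measurable lborel" and "\<And>y. 0 \<le> f y"
    and "(\<integral>\<^sup>+y. ennreal (f y) \<partial>gauss_vec \<theta> v) < \<infinity>"
  shows "integrable lborel (\<lambda>y. f y * exp (- (1 / (2 * v)) * (norm (y - \<theta>))\<^sup>2))"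
proof -
  define c where "c = (2 * pi * v) powr (- (CARD('n) / 2))"
  have "0 < c"
    using assms by (simp add: c_def)
  have "(\<integral>\<^sup>+y. ennreal (f y) \<partial>gauss_vec \<theta> v)
      = (\<integral>\<^sup>+y. ennreal (c * (f y * exp (- (1 / (2 * v)) * (norm (y - \<theta>))\<^sup>2))) \<partial>lborel)"
    using assms unfolding gauss_vec_def
    by (subst nn_integral_density) (auto simp: prod_normal_density_eq c_def ennreal_mult' mult_ac)
  then have "integrable lborel (\<lambda>y. c * (f y * exp (- (1 / (2 * v)) * (norm (y - \<theta>))\<^sup>2)))"
    using assms \<open>0 < c\<close> by (intro integrableI_nonneg) auto
  then show ?thesis
    using \<open>0 < c\<close> by simp
qed

lemma integral_gauss_vec:
  fixes \<theta> :: "real^'n"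
  assumes "0 < v" and "f \<in> borel_measurable lborel"
  shows "(\<integral>y. f y \<partial>gauss_vec \<theta> v)
       = (2 * pi * v) powr (- (CARD('n) / 2)) * (\<integral>y. f y * exp (- (1 / (2 * v)) * (norm (y - \<theta>))\<^sup>2) \<partial>lborel)"
proof -
  have "(\<integral>y. f y \<partial>gauss_vec \<theta> v)
      = (\<integral>y. (\<Prod>i\<in>UNIV. normal_density (\<theta> $ i) (sqrt v) (y $ i)) * f y \<partial>lborel)"
    unfolding gauss_vec_def using assms by (subst integral_density) (auto simp: prod_nonneg)
  also have "\<dots> = (\<integral>y. (2 * pi * v) powr (- (CARD('n) / 2))
      * (f y * exp (- (1 / (2 * v)) * (norm (y - \<theta>))\<^sup>2)) \<partial>lborel)"
    using assms by (intro Bochner_Integration.integral_cong) (simp_all add: prod_normal_density_eq)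
  finally show ?thesis
    by simp
qed

lemma integrable_loss_gauss_weight:
  fixes \<theta> :: "real^'n" and g :: "real^'n \<Rightarrow> real^'n"
  assumes "0 < v" and "g \<in> borel_measurable lborel"
    and "(\<integral>\<^sup>+y. ennreal ((norm (g y))\<^sup>2) \<partial>gauss_vec \<theta> v) < \<infinity>"
  shows "integrable lborel (\<lambda>y. (norm (\<theta> - g y))\<^sup>2 * exp (- (1 / (2 * v)) * (norm (y - \<theta>))\<^sup>2))"
proof -
  define w where "w y = exp (- (1 / (2 * v)) * (norm (y - \<theta>))\<^sup>2)" for y :: "real^'n"
  have [measurable]: "g \<in> borel_measurable borel"
    using assms(2) by (simp add: measurable_lborel1)
  have "(\<integral>\<^sup>+y. ennreal 1 \<partial>gauss_vec \<theta> v) < \<infinity>"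
    using prob_space.emeasure_space_1[OF prob_space_gauss_vec[of v \<theta>]] \<open>0 < v\<close> by simp
  then have "integrable lborel (\<lambda>y. 1 * w y)"
    unfolding w_def using \<open>0 < v\<close> by (intro integrable_gauss_weight) auto
  moreover have "integrable lborel (\<lambda>y. (norm (g y))\<^sup>2 * w y)"
    unfolding w_def using assms by (intro integrable_gauss_weight) auto
  ultimately have "integrable lborel (\<lambda>y. 2 * (norm \<theta>)\<^sup>2 * w y + 2 * ((norm (g y))\<^sup>2 * w y))"
    by simp
  then have "integrable lborel (\<lambda>y. (norm (\<theta> - g y))\<^sup>2 * w y)"
  proof (rule Bochner_Integration.integrable_bound)
    have "(norm (\<theta> - g y))\<^sup>2 \<le> 2 * (norm \<theta>)\<^sup>2 + 2 * (norm (g y))\<^sup>2" for y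
    proof -
      have "(norm (\<theta> - g y))\<^sup>2 \<le> (norm \<theta> + norm (g y))\<^sup>2"
        by (intro power_mono norm_triangle_ineq4) simp
      also have "\<dots> \<le> 2 * (norm \<theta>)\<^sup>2 + 2 * (norm (g y))\<^sup>2"
        using sum_squares_ge_zero[of "norm \<theta> - norm (g y)" 0] by (simp add: power2_eq_square algebra_simps)
      finally show ?thesis .
    qed
    then have "(norm (\<theta> - g y))\<^sup>2 * w y \<le> 2 * (norm \<theta>)\<^sup>2 * w y + 2 * ((norm (g y))\<^sup>2 * w y)" for y
      using mult_right_mono[of _ _ "w y"] by (simp add: w_def flip: distrib_right mult.assoc)
    then show "AE y in lborel. norm ((norm (\<theta> - g y))\<^sup>2 * w y)
        \<le> norm (2 * (norm \<theta>)\<^sup>2 * w y + 2 * ((norm (g y))\<^sup>2 * w y))"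
      by (intro AE_I2) (simp add: w_def)
  qed (simp add: w_def)
  then show ?thesis
    by (simp add: w_def)
qed

lemma Risk_eq_laplace_moment:
  fixes \<theta> :: "real^'n"
  assumes "0 < (1 + \<alpha>) * \<sigma>2" and "g \<in> borel_measurable lborel"
  shows "Risk \<theta> \<sigma>2 g \<alpha> = (2 * pi * ((1 + \<alpha>) * \<sigma>2)) powr (- (CARD('n) / 2))
     * laplace_moment lborel (\<lambda>y. (norm (\<theta> - g y))\<^sup>2) (\<lambda>y. (norm (y - \<theta>))\<^sup>2) 0 (1 / (2 * ((1 + \<alpha>) * \<sigma>2)))"
proof -
  have [measurable]: "g \<in> borel_measurable borel"
    using assms(2) by (simp add: measurable_lborel1)
  show ?thesis
    unfolding Risk_def Y_law_def laplace_moment_def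
    by (subst integral_gauss_vec[OF assms(1)]) simp_all
qed

theorem proposition2:
  fixes \<theta> :: "real^'n" and \<sigma>2 \<beta> :: real and k :: nat
    and g :: "real^'n \<Rightarrow> real^'n"
  assumes "\<sigma>2 > 0"
    and "g \<in> borel_measurable lborel"
    and "\<beta> > 0"
    and "\<forall>m\<le>k. (\<integral>\<^sup>+ y. ennreal ((norm (g y))\<^sup>2 * (norm (y - \<theta>)) ^ (2 * m))
                      \<partial>(Y_law \<theta> \<sigma>2 \<beta>)) < \<infinity>"
  shows "k_times_cont_diff_on k (Risk \<theta> \<sigma>2 g) {0..<\<beta>}"
proof -
  let ?h = "\<lambda>y. (norm (\<theta> - g y))\<^sup>2" and ?p = "\<lambda>y. (norm (y - \<theta>))\<^sup>2"
  define s where "s \<alpha> = 1 / (2 * ((1 + \<alpha>) * \<sigma>2))" for \<alpha>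
  have [measurable]: "g \<in> borel_measurable borel"
    using assms(2) by (simp add: measurable_lborel1)
  have "integrable lborel (\<lambda>y. ?h y * exp (- s \<beta> * ?p y))"
    using assms(1-4) unfolding s_def by (intro integrable_loss_gauss_weight) (auto simp: Y_law_def)
  then have laplace: "Ck_on k {s \<beta><..} (laplace_moment lborel ?h ?p 0)"
    by (intro Ck_on_laplace_moment) auto
  have "Ck_on k {0..<\<beta>} (\<lambda>\<alpha>. (2 * \<sigma>2 * (1 + \<alpha>)) powr -1)"
    using assms(1) by (intro Ck_on_affine_powr) auto
  then have "Ck_on k {0..<\<beta>} s"
    by (rule Ck_on_cong) (use assms(1) in \<open>simp add: s_def powr_neg_one mult_ac\<close>)
  moreover have "s \<alpha> \<in> {s \<beta><..}" if "\<alpha> \<in> {0..<\<beta>}" for \<alpha>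
    using that assms(1) unfolding s_def
    by (auto intro!: divide_strict_left_mono mult_strict_right_mono)
  ultimately have "Ck_on k {0..<\<beta>}
      (\<lambda>\<alpha>. (2 * pi * \<sigma>2 * (1 + \<alpha>)) powr (- (CARD('n) / 2)) * laplace_moment lborel ?h ?p 0 (s \<alpha>))"
    using assms(1) by (intro Ck_on_mult Ck_on_affine_powr Ck_on_compose[OF open_greaterThan _ laplace]) auto
  then have "Ck_on k {0..<\<beta>} (Risk \<theta> \<sigma>2 g)"
    by (rule Ck_on_cong) (use assms(1,2) in \<open>simp add: Risk_eq_laplace_moment s_def mult_ac\<close>)
  then show ?thesis
    by (rule Ck_on_imp_k_times_cont_diff_on)
qed

end
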